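(* Let ${\cal C}\subseteq\mathbb{Z}_2^\alpha\times\mathbb{Z}_4^\beta$ be a $\mathbb{Z}_2\mathbb{Z}_4$-additive code such that $\Phi({\cal C})$ is a linear binary code. Then ${\cal C}_Y$ is a $\mathbb{Z}_4$-additive code such that $\phi({\cal C}_Y)$ is a linear binary code.
   Context: A $\mathbb{Z}_2\mathbb{Z}_4$-additive code is a subgroup of $\mathbb{Z}_2^\alpha\times\mathbb{Z}_4^\beta$; ${\cal C}_Y$ is its projection onto the last $\beta$ ($\mathbb{Z}_4$) coordinates. Writing each $u'_i\in\mathbb{Z}_4$ as $u'_i=\tilde u'_i+2\hat u'_i$ with $\tilde u'_i,\hat u'_i\in\{0,1\}$, the Gray map $\phi:\mathbb{Z}_4^n\to\mathbb{Z}_2^{2n}$ is $\phi(u')=(\hat u'_0,\dots,\hat u'_{n-1},\tilde u'_0+\hat u'_0,\dots,\tilde u'_{n-1}+\hat u'_{n-1})$, and the extended Gray map is $\Phi(u\mid u')=(u\mid\phi(u'))\in\mathbb{Z}_2^{\alpha+2\beta}$. A binary code is linear if it is a $\mathbb{Z}_2$-subspace. *)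

theory Defs
  imports Main
begin

text \<open>Elements of Z_2 are represented by the integers 0,1 and elements of Z_4 by
  0,1,2,3; vectors are integer lists of the given length; arithmetic is componentwise mod m.\<close>

definition vecs :: "int \<Rightarrow> nat \<Rightarrow> int list set" where
  "vecs m n = {v. length v = n \<and> set v \<subseteq> {0..<m}}"

definition vadd :: "int \<Rightarrow> int list \<Rightarrow> int list \<Rightarrow> int list" where
  "vadd m u v = map2 (\<lambda>a b. (a + b) mod m) u v"

definition vneg :: "int \<Rightarrow> int list \<Rightarrow> int list" where
  "vneg m u = map (\<lambda>a. (- a) mod m) u"

definition Z2Z4_additive :: "nat \<Rightarrow> nat \<Rightarrow> (int list \<times> int list) set \<Rightarrow> bool" where
  "Z2Z4_additive \<alpha> \<beta> C \<longleftrightarrow>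
     C \<subseteq> vecs 2 \<alpha> \<times> vecs 4 \<beta> \<and>
     (replicate \<alpha> 0, replicate \<beta> 0) \<in> C \<and>
     (\<forall>x\<in>C. \<forall>y\<in>C. (vadd 2 (fst x) (fst y), vadd 4 (snd x) (snd y)) \<in> C) \<and>
     (\<forall>x\<in>C. (vneg 2 (fst x), vneg 4 (snd x)) \<in> C)"

definition Z4_additive :: "nat \<Rightarrow> int list set \<Rightarrow> bool" where
  "Z4_additive \<beta> D \<longleftrightarrow>
     D \<subseteq> vecs 4 \<beta> \<and> replicate \<beta> 0 \<in> D \<and>
     (\<forall>x\<in>D. \<forall>y\<in>D. vadd 4 x y \<in> D) \<and> (\<forall>x\<in>D. vneg 4 x \<in> D)"

definition binary_linear :: "nat \<Rightarrow> int list set \<Rightarrow> bool" where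
  "binary_linear n B \<longleftrightarrow>
     B \<subseteq> vecs 2 n \<and> replicate n 0 \<in> B \<and>
     (\<forall>x\<in>B. \<forall>y\<in>B. vadd 2 x y \<in> B) \<and>
     (\<forall>x\<in>B. \<forall>c\<in>{0,1::int}. map (\<lambda>a. (c * a) mod 2) x \<in> B)"

text \<open>Gray map: u' = tilde + 2 hat, tilde = u' mod 2, hat = u' div 2.\<close>
definition gray :: "int list \<Rightarrow> int list" where
  "gray u' = map (\<lambda>a. a div 2) u' @ map (\<lambda>a. (a mod 2 + a div 2) mod 2) u'"

definition Gray_ext :: "int list \<times> int list \<Rightarrow> int list" where
  "Gray_ext x = fst x @ gray (snd x)"

definition C_Y :: "(int list \<times> int list) set \<Rightarrow> int list set" where
  "C_Y C = snd ` C"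

end

theory Submission
  imports Defs
begin

text \<open>For the Gray image, note that \<open>\<Phi>(x | x') = x @ \<phi>(x')\<close> with \<open>x\<close> of length \<open>\<alpha>\<close>, so
  \<open>\<phi>(\<C>\<^sub>Y)\<close> is obtained from the binary linear code \<open>\<Phi>(\<C>)\<close> by deleting its first \<open>\<alpha>\<close> coordinates,
  and deleting coordinates preserves binary linearity.\<close>

lemma binary_scalar_mult_cases:
  assumes "x \<in> vecs 2 n" and "c \<in> {0, 1::int}"
  shows "map (\<lambda>a. (c * a) mod 2) x \<in> {x, replicate n 0}"
proof -
  have "map (\<lambda>a. a mod 2) x = x"
    using assms(1) by (intro map_idI) (auto simp: vecs_def)
  then show ?thesis
    using assms by (auto simp: vecs_def map_replicate_const)
qed

lemma binary_linearI:
  assumes sub: "B \<subseteq> vecs 2 n" and zero: "replicate n 0 \<in> B"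
    and add: "\<And>x y. x \<in> B \<Longrightarrow> y \<in> B \<Longrightarrow> vadd 2 x y \<in> B"
  shows "binary_linear n B"
proof -
  have "map (\<lambda>a. (c * a) mod 2) x \<in> B" if "x \<in> B" "c \<in> {0, 1}" for x and c :: int
  proof -
    have "x \<in> vecs 2 n"
      using sub that(1) by (rule subsetD)
    then have "map (\<lambda>a. (c * a) mod 2) x \<in> {x, replicate n 0}"
      using that(2) by (rule binary_scalar_mult_cases)
    then show ?thesis
      using that(1) zero by auto
  qed
  with sub zero add show ?thesis
    unfolding binary_linear_def by (intro conjI ballI) simp_all
qed

lemma drop_vadd: "drop k (vadd m u v) = vadd m (drop k u) (drop k v)"
  by (simp add: vadd_def drop_map drop_zip)

lemma drop_vecs: "v \<in> vecs m (k + n) \<Longrightarrow> drop k v \<in> vecs m n"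
  by (auto simp: vecs_def dest: in_set_dropD)

lemma binary_linear_drop:
  assumes "binary_linear (k + n) B"
  shows "binary_linear n (drop k ` B)"
proof (rule binary_linearI)
  have sub: "B \<subseteq> vecs 2 (k + n)" and zero: "replicate (k + n) 0 \<in> B"
    and add: "\<And>u v. u \<in> B \<Longrightarrow> v \<in> B \<Longrightarrow> vadd 2 u v \<in> B"
    using assms by (simp_all add: binary_linear_def)
  show "drop k ` B \<subseteq> vecs 2 n"
    using sub drop_vecs by blast
  show "replicate n 0 \<in> drop k ` B"
    by (rule rev_image_eqI[OF zero]) simp
  fix x y assume "x \<in> drop k ` B" "y \<in> drop k ` B"
  then obtain u v where "u \<in> B" "v \<in> B" "x = drop k u" "y = drop k v"
    by blast
  then show "vadd 2 x y \<in> drop k ` B"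
    by (intro rev_image_eqI[OF add]) (simp_all add: drop_vadd)
qed

lemma Z4_additive_C_Y:
  assumes "Z2Z4_additive \<alpha> \<beta> C"
  shows "Z4_additive \<beta> (C_Y C)"
proof -
  have sub: "C \<subseteq> vecs 2 \<alpha> \<times> vecs 4 \<beta>"
    and zero: "(replicate \<alpha> 0, replicate \<beta> 0) \<in> C"
    and add: "\<And>u v. u \<in> C \<Longrightarrow> v \<in> C \<Longrightarrow>
                (vadd 2 (fst u) (fst v), vadd 4 (snd u) (snd v)) \<in> C"
    and neg: "\<And>u. u \<in> C \<Longrightarrow> (vneg 2 (fst u), vneg 4 (snd u)) \<in> C"
    using assms by (simp_all add: Z2Z4_additive_def)
  have "snd ` C \<subseteq> vecs 4 \<beta>"
    using sub by auto
  moreover have "replicate \<beta> 0 \<in> snd ` C"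
    by (rule rev_image_eqI[OF zero]) simp
  moreover have "vadd 4 x y \<in> snd ` C" if "x \<in> snd ` C" "y \<in> snd ` C" for x y
    using that by (auto intro: rev_image_eqI[OF add])
  moreover have "vneg 4 x \<in> snd ` C" if "x \<in> snd ` C" for x
    using that by (auto intro: rev_image_eqI[OF neg])
  ultimately show ?thesis
    by (simp add: Z4_additive_def C_Y_def)
qed

lemma gray_C_Y_eq_drop_Gray_ext:
  assumes "Z2Z4_additive \<alpha> \<beta> C"
  shows "gray ` C_Y C = drop \<alpha> ` Gray_ext ` C"
proof -
  have "drop \<alpha> (Gray_ext x) = gray (snd x)" if "x \<in> C" for x
  proof -
    have "fst x \<in> vecs 2 \<alpha>"
      using assms that by (auto simp: Z2Z4_additive_def)
    then show ?thesis
      by (simp add: vecs_def Gray_ext_def)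
  qed
  then show ?thesis
    unfolding C_Y_def image_image by (rule image_cong[OF refl, symmetric])
qed

theorem mainTheorem3:
  fixes \<alpha> \<beta> :: nat and C :: "(int list \<times> int list) set"
  assumes "Z2Z4_additive \<alpha> \<beta> C"
    and "binary_linear (\<alpha> + 2 * \<beta>) (Gray_ext ` C)"
  shows "Z4_additive \<beta> (C_Y C) \<and> binary_linear (2 * \<beta>) (gray ` C_Y C)"
  using Z4_additive_C_Y[OF assms(1)] binary_linear_drop[OF assms(2)]
  by (simp add: gray_C_Y_eq_drop_Gray_ext[OF assms(1)])

end
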